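(* Let $X$ be the compound-Poisson-driven Ornstein–Uhlenbeck process of the context and $G$ the law of the log jump sizes. (i) If $\int xG(dx)=\infty$, then $X$ is not positive recurrent. (ii) If $G$ is heavy-tailed, then $X$ is not geometrically ergodic.
   Context: $X$ is the $[0,\infty)$-valued process solving $dX_t=-\mu X_tdt+dZ_t$ with $\mu>0$, $Z_t=\sum_{i=1}^{N_t}W_i$, where $(W_i)_{i\ge1}$ are i.i.d. with law $F$ on $(0,\infty)$ and $(N_t)$ is a Poisson process of finite rate $\lambda>0$ independent of $(W_i)$. $G$ is the law of $\log W_1$, i.e. $G(A)=F(e^A)$. A probability measure is heavy-tailed if, for a random variable $Y$ with that law, $\mathbb E[e^{\kappa Y}]=\infty$ for all $\kappa>0$. Positive recurrent: Harris recurrent with a finite invariant measure. Geometrically ergodic: there is an invariant probability $\pi$ and $\kappa>1$ with $\lim_t\kappa^t\|P^t(x,\cdot)-\pi\|_{TV}=0$ for all $x$. *)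

theory Defs
  imports "HOL-Probability.Probability"
begin

definition poisson_process :: "'a measure \<Rightarrow> real \<Rightarrow> (real \<Rightarrow> 'a \<Rightarrow> nat) \<Rightarrow> bool" where
  "poisson_process M lam N \<longleftrightarrow>
     prob_space M \<and>
     (\<forall>t. N t \<in> measurable M (count_space UNIV)) \<and>
     (\<forall>\<omega>\<in>space M. N 0 \<omega> = 0 \<and> mono_on {0..} (\<lambda>t. N t \<omega>) \<and>
        (\<forall>t\<ge>0. continuous (at_right t) (\<lambda>s. real (N s \<omega>)))) \<and>
     (\<forall>s t k. 0 \<le> s \<longrightarrow> s \<le> t \<longrightarrow>
        measure M {\<omega>\<in>space M. N t \<omega> - N s \<omega> = k}
          = (lam * (t - s)) ^ k / fact k * exp (- (lam * (t - s)))) \<and>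
     (\<forall>(n::nat) (ts::nat \<Rightarrow> real). 0 \<le> ts 0 \<longrightarrow> (\<forall>i<n. ts i \<le> ts (Suc i)) \<longrightarrow>
        prob_space.indep_vars M (\<lambda>_. count_space UNIV)
          (\<lambda>i \<omega>. N (ts (Suc i)) \<omega> - N (ts i) \<omega>) {..<n})"

definition cpp :: "(real \<Rightarrow> 'a \<Rightarrow> nat) \<Rightarrow> (nat \<Rightarrow> 'a \<Rightarrow> real) \<Rightarrow> real \<Rightarrow> 'a \<Rightarrow> real" where
  "cpp N W t \<omega> = (\<Sum>i\<in>{1..N t \<omega>}. W i \<omega>)"

text \<open>Xx is the (pathwise) solution started at x of dX_t = - mu X_t dt + dZ_t, i.e.
  X_t = x - mu int_0^t X_s ds + Z_t for all t >= 0 (paths locally integrable).\<close>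
definition ou_solution ::
  "'a measure \<Rightarrow> real \<Rightarrow> (real \<Rightarrow> 'a \<Rightarrow> nat) \<Rightarrow> (nat \<Rightarrow> 'a \<Rightarrow> real) \<Rightarrow> real \<Rightarrow> (real \<Rightarrow> 'a \<Rightarrow> real) \<Rightarrow> bool"
  where
  "ou_solution M \<mu> N W x Xx \<longleftrightarrow>
     (\<forall>t\<ge>0. Xx t \<in> borel_measurable M) \<and>
     (\<forall>\<omega>\<in>space M. \<forall>t\<ge>0.
        set_integrable lborel {0..t} (\<lambda>s. Xx s \<omega>) \<and>
        Xx t \<omega> = x - \<mu> * (LBINT s:{0..t}. Xx s \<omega>) + cpp N W t \<omega>)"

definition trans :: "'a measure \<Rightarrow> (real \<Rightarrow> real \<Rightarrow> 'a \<Rightarrow> real) \<Rightarrow> real \<Rightarrow> real \<Rightarrow> real measure" where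
  "trans M X t x = distr M borel (X x t)"

definition invariant_measure :: "'a measure \<Rightarrow> (real \<Rightarrow> real \<Rightarrow> 'a \<Rightarrow> real) \<Rightarrow> real measure \<Rightarrow> bool" where
  "invariant_measure M X \<pi> \<longleftrightarrow>
     sets \<pi> = sets borel \<and> emeasure \<pi> (- {0..}) = 0 \<and> emeasure \<pi> {0..} > 0 \<and>
     (\<forall>t\<ge>0. \<forall>A\<in>sets borel. emeasure \<pi> A = (\<integral>\<^sup>+ x. emeasure (trans M X t x) A \<partial>\<pi>))"

definition harris_recurrent :: "'a measure \<Rightarrow> (real \<Rightarrow> real \<Rightarrow> 'a \<Rightarrow> real) \<Rightarrow> bool" where
  "harris_recurrent M X \<longleftrightarrow>
     (\<exists>\<phi>. sets \<phi> = sets borel \<and> sigma_finite_measure \<phi> \<and>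
        emeasure \<phi> (- {0..}) = 0 \<and> emeasure \<phi> {0..} > 0 \<and>
        (\<forall>A\<in>sets borel. emeasure \<phi> A > 0 \<longrightarrow>
           (\<forall>x\<ge>0. AE \<omega> in M. (\<integral>\<^sup>+ t. indicator ({0..} \<inter> {t. X x t \<omega> \<in> A}) t \<partial>lborel) = \<infinity>)))"

definition positive_recurrent :: "'a measure \<Rightarrow> (real \<Rightarrow> real \<Rightarrow> 'a \<Rightarrow> real) \<Rightarrow> bool" where
  "positive_recurrent M X \<longleftrightarrow>
     harris_recurrent M X \<and> (\<exists>\<pi>. invariant_measure M X \<pi> \<and> emeasure \<pi> UNIV < \<infinity>)"

definition tv_norm :: "real measure \<Rightarrow> real measure \<Rightarrow> real" where
  "tv_norm \<mu> \<nu> = (SUP A\<in>sets \<mu>. \<bar>measure \<mu> A - measure \<nu> A\<bar>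
                      + \<bar>measure \<mu> (space \<mu> - A) - measure \<nu> (space \<mu> - A)\<bar>)"

definition geometrically_ergodic :: "'a measure \<Rightarrow> (real \<Rightarrow> real \<Rightarrow> 'a \<Rightarrow> real) \<Rightarrow> bool" where
  "geometrically_ergodic M X \<longleftrightarrow>
     (\<exists>\<pi> \<kappa>. invariant_measure M X \<pi> \<and> prob_space \<pi> \<and> \<kappa> > 1 \<and>
        (\<forall>x\<ge>0. ((\<lambda>t. \<kappa> powr t * tv_norm (trans M X t x) \<pi>) \<longlongrightarrow> 0) at_top))"

definition heavy_tailed :: "real measure \<Rightarrow> bool" where
  "heavy_tailed G \<longleftrightarrow> (\<forall>\<kappa>>0. (\<integral>\<^sup>+ y. ennreal (exp (\<kappa> * y)) \<partial>G) = \<infinity>)"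

end

theory Submission
  imports Defs
begin

(*
  Pathwise comparison for the linear equation gives X^x_t >= e^(-mu t) (x + Z_t) and
  X^x_t >= X^0_t.  Hence P^t(x, (y,oo)) is 1 for x > y e^(mu t) and at least
  q_t(y) = P(X^0_t > y) otherwise, and integrating against an invariant measure pi gives
    pi(y e^(mu t), oo) + pi(-oo, y e^(mu t)] q_t(y) <= pi(y, oo).
  A jump larger than y e^mu before time 1 lifts X^0_1 above y, so the independence of N
  and W gives q_1(e^s) >= (1 - e^(-lam)) G(s + mu, oo).

  (i) Iterating the inequality with t = 1 bounds pi(-oo, e^s] by
  pi(R) exp(-(1 - e^(-lam)) sum_k G(s + mu + k mu, oo)); the sum diverges when G has
  infinite mean, so a finite pi vanishes.
  (ii) If P^t(0, .) converges to pi at rate kappa^(-t), the inequality forces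
  pi(y e^(mu t), oo) = O(kappa^(-t)), hence G(mu t, oo) = O(kappa^(-t)), and G has
  exponential moments.
*)

section \<open>A comparison principle for the integral equation\<close>

lemma nonneg_if_decrease_bounded_by_integral:
  fixes V :: "real \<Rightarrow> real"
  assumes int: "V integrable_on {s..T}" and "c \<ge> 0" and "V s \<ge> 0"
    and decrease: "\<And>r' r. s \<le> r' \<Longrightarrow> r' \<le> r \<Longrightarrow> r \<le> T \<Longrightarrow> V r' - c * integral {r'..r} V \<le> V r"
    and r: "r \<in> {s..T}"
  shows "V r \<ge> 0"
proof (rule ccontr)
  \<comment> \<open>The bound -c * integral {r'..r} V \<le> V r holds on S, hence at a = sup S,
    and V < 0 on (a, r].\<close>
  assume neg: "\<not> V r \<ge> 0"
  define S where "S = {r' \<in> {s..r}. V r' \<ge> 0}"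
  define a where "a = Sup S"
  have "s \<in> S" "bdd_above S"
    using \<open>V s \<ge> 0\<close> r by (auto simp: S_def intro: bdd_aboveI[of _ r])
  hence a: "a \<in> closure S" "s \<le> a" "a \<le> r"
    unfolding a_def by (auto intro: closure_contains_Sup cSup_upper cSup_least simp: S_def)
  have "V integrable_on {s..r}" using integrable_subinterval_real[OF int] r by auto
  hence "closed {r' \<in> {s..r}. - c * integral {r'..r} V \<le> V r}"
    by (intro continuous_on_closed_Collect_le continuous_intros indefinite_integral_continuous_1') auto
  moreover have "S \<subseteq> {r' \<in> {s..r}. - c * integral {r'..r} V \<le> V r}"
    using decrease r by (force simp: S_def)
  ultimately have "closure S \<subseteq> {r' \<in> {s..r}. - c * integral {r'..r} V \<le> V r}"
    by (rule closure_minimal[rotated])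
  with a have bound: "- c * integral {a..r} V \<le> V r" by auto
  have "V v < 0" if "a < v" "v \<le> r" for v
  proof (rule ccontr)
    assume "\<not> V v < 0"
    with that a have "v \<in> S" by (auto simp: S_def)
    hence "v \<le> a" unfolding a_def using \<open>bdd_above S\<close> by (rule cSup_upper)
    with that show False by simp
  qed
  moreover have "V integrable_on {a..r}" using integrable_subinterval_real[OF int] a r by auto
  hence "(\<lambda>v. if v = a then 0 else V v) integrable_on {a..r}"
    by (rule integrable_spike[where S="{a}"]) auto
  ultimately have "integral {a..r} (\<lambda>v. if v = a then 0 else V v) \<le> integral {a..r} (\<lambda>_. 0)"
    by (intro integral_le) (auto intro: less_imp_le)
  also have "integral {a..r} (\<lambda>v. if v = a then 0 else V v) = integral {a..r} V"
    by (rule integral_spike[of "{a}"]) auto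
  finally have "- c * integral {a..r} V \<ge> 0"
    using \<open>c \<ge> 0\<close> by (simp add: mult_nonneg_nonpos)
  with bound neg show False by simp
qed

lemma has_integral_exp_neg_mult:
  fixes \<mu> a b :: real
  assumes "\<mu> > 0" "a \<le> b"
  shows "((\<lambda>v. exp (- \<mu> * v)) has_integral (exp (- \<mu> * a) - exp (- \<mu> * b)) / \<mu>) {a..b}"
proof -
  have "((\<lambda>v. exp (- \<mu> * v)) has_integral (- exp (- \<mu> * b) / \<mu>) - (- exp (- \<mu> * a) / \<mu>)) {a..b}"
  proof (rule fundamental_theorem_of_calculus[OF \<open>a \<le> b\<close>])
    fix x assume "x \<in> {a..b}"
    have "((\<lambda>v. - exp (- \<mu> * v) / \<mu>) has_real_derivative exp (- \<mu> * x)) (at x within {a..b})"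
      using \<open>\<mu> > 0\<close> by (auto intro!: derivative_eq_intros)
    thus "((\<lambda>v. - exp (- \<mu> * v) / \<mu>) has_vector_derivative exp (- \<mu> * x)) (at x within {a..b})"
      by (simp add: has_real_derivative_iff_has_vector_derivative)
  qed
  thus ?thesis by (simp add: diff_divide_distrib)
qed

definition solves_ou_equation :: "real \<Rightarrow> (real \<Rightarrow> real) \<Rightarrow> real \<Rightarrow> (real \<Rightarrow> real) \<Rightarrow> bool" where
  "solves_ou_equation \<mu> U u0 A \<longleftrightarrow>
     (\<forall>t\<ge>0. U integrable_on {0..t} \<and> U t = u0 - \<mu> * integral {0..t} U + A t)"

lemma solves_ou_equation_increment:
  assumes sol: "solves_ou_equation \<mu> U u0 A" and "0 \<le> r'" "r' \<le> r"
  shows "U r - U r' = - \<mu> * integral {r'..r} U + (A r - A r')"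
proof -
  have "U integrable_on {0..r}" using sol assms(2,3) unfolding solves_ou_equation_def by auto
  hence "integral {0..r} U = integral {0..r'} U + integral {r'..r} U"
    using assms(2,3) by (simp add: Henstock_Kurzweil_Integration.integral_combine)
  moreover have "U r = u0 - \<mu> * integral {0..r} U + A r" "U r' = u0 - \<mu> * integral {0..r'} U + A r'"
    using sol assms(2,3) unfolding solves_ou_equation_def by auto
  ultimately show ?thesis by (simp add: algebra_simps)
qed

lemma solves_ou_equation_diff:
  assumes "solves_ou_equation \<mu> U u A" "solves_ou_equation \<mu> U' u' A"
  shows "solves_ou_equation \<mu> (\<lambda>t. U t - U' t) (u - u') (\<lambda>_. 0)"
  unfolding solves_ou_equation_def
proof (intro allI impI conjI)
  fix t :: real assume "t \<ge> 0"
  hence "U integrable_on {0..t}" "U' integrable_on {0..t}"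
    and "U t = u - \<mu> * integral {0..t} U + A t" "U' t = u' - \<mu> * integral {0..t} U' + A t"
    using assms unfolding solves_ou_equation_def by auto
  thus "(\<lambda>t. U t - U' t) integrable_on {0..t}"
    and "U t - U' t = u - u' - \<mu> * integral {0..t} (\<lambda>t. U t - U' t) + 0"
    by (auto simp: integral_diff algebra_simps intro: integrable_diff)
qed

lemma mono_on_mult_continuous_integrable:
  fixes f g :: "real \<Rightarrow> real"
  assumes "mono_on {a..b} f" "continuous_on {a..b} g"
  shows "(\<lambda>x. f x * g x) integrable_on {a..b}"
proof -
  have "integrable (lebesgue_on {a..b}) f" using assms(1) by (rule integrable_mono_on)
  moreover have "f ` {a..b} \<subseteq> {f a..f b}"
    using assms(1) by (auto simp: mono_on_def)
  hence "bounded (f ` {a..b})" by (rule bounded_subset[rotated]) simp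
  ultimately have "(\<lambda>x. f x * g x) absolutely_integrable_on {a..b}"
    using assms(2) by (intro absolutely_integrable_bounded_measurable_product_real
        absolutely_integrable_continuous_real borel_measurable_integrable) auto
  thus ?thesis by (rule set_lebesgue_integral_eq_integral)
qed

lemma integral_mono_on_mult_exp_le:
  fixes B :: "real \<Rightarrow> real"
  assumes "\<mu> > 0" "mono_on {r'..r} B" "0 \<le> r'" "r' \<le> r"
  shows "\<mu> * integral {r'..r} (\<lambda>v. B v * exp (- \<mu> * v))
           \<le> (B r - B r') - (B r * exp (- \<mu> * r) - B r' * exp (- \<mu> * r'))"
proof -
  have B_le: "B v \<le> B r" if "v \<in> {r'..r}" for v
    using assms(2,4) that by (auto simp: mono_on_def)
  have exp_int: "((\<lambda>v. B r * exp (- \<mu> * v)) has_integral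
      B r * ((exp (- \<mu> * r') - exp (- \<mu> * r)) / \<mu>)) {r'..r}"
    by (intro has_integral_mult_right has_integral_exp_neg_mult assms(1,4))
  have "integral {r'..r} (\<lambda>v. B v * exp (- \<mu> * v)) \<le> integral {r'..r} (\<lambda>v. B r * exp (- \<mu> * v))"
  proof (rule integral_le)
    show "(\<lambda>v. B v * exp (- \<mu> * v)) integrable_on {r'..r}"
      using assms(2) by (intro mono_on_mult_continuous_integrable continuous_intros)
  qed (use has_integral_integrable[OF exp_int] B_le in auto)
  also have "\<dots> = B r * ((exp (- \<mu> * r') - exp (- \<mu> * r)) / \<mu>)"
    using exp_int by (rule integral_unique)
  finally have "\<mu> * integral {r'..r} (\<lambda>v. B v * exp (- \<mu> * v)) \<le> B r * (exp (- \<mu> * r') - exp (- \<mu> * r))"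
    using assms(1) by (simp add: field_simps)
  moreover have "0 \<le> (B r - B r') * (1 - exp (- \<mu> * r'))"
    using assms(1,3,4) B_le[of r'] by (intro mult_nonneg_nonneg) auto
  ultimately show ?thesis by (simp add: algebra_simps)
qed

lemma solves_ou_equation_lower_bound:
  assumes "\<mu> > 0" and sol: "solves_ou_equation \<mu> U u0 A" and A: "mono_on {0..} A" "A 0 = 0"
    and "t \<ge> 0"
  shows "exp (- \<mu> * t) * (u0 + A t) \<le> U t"
proof -
  define w where "w = (\<lambda>v. (u0 + A v) * exp (- \<mu> * v))"
  define V where "V = (\<lambda>v. U v - w v)"
  have B_mono: "mono_on {r'..r} (\<lambda>v. u0 + A v)" if "0 \<le> r'" for r' r
    using A(1) that by (auto simp: mono_on_def)
  have w_int: "w integrable_on {0..t}"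
    unfolding w_def by (intro mono_on_mult_continuous_integrable B_mono continuous_intros) simp
  have U_int: "U integrable_on {0..t}" and "U 0 = u0"
    using sol \<open>t \<ge> 0\<close> A(2) unfolding solves_ou_equation_def by auto
  have "V t \<ge> 0"
  proof (rule nonneg_if_decrease_bounded_by_integral[where V=V and s=0 and T=t and c=\<mu>])
    show "V integrable_on {0..t}" unfolding V_def using U_int w_int by (rule integrable_diff)
    show "V 0 \<ge> 0" using \<open>U 0 = u0\<close> A(2) by (simp add: V_def w_def)
    fix r' r assume r: "0 \<le> r'" "r' \<le> r" "r \<le> t"
    have "integral {r'..r} V = integral {r'..r} U - integral {r'..r} w"
      unfolding V_def using r
      by (intro integral_diff integrable_subinterval_real[OF U_int] integrable_subinterval_real[OF w_int]) auto
    hence "\<mu> * integral {r'..r} V = \<mu> * integral {r'..r} U - \<mu> * integral {r'..r} w"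
      by (simp add: right_diff_distrib)
    moreover have "\<mu> * integral {r'..r} w \<le> ((u0 + A r) - (u0 + A r')) - (w r - w r')"
      unfolding w_def by (rule integral_mono_on_mult_exp_le[OF \<open>\<mu> > 0\<close> B_mono[OF r(1)] r(1,2)])
    ultimately show "V r' - \<mu> * integral {r'..r} V \<le> V r"
      using solves_ou_equation_increment[OF sol r(1,2)] by (simp add: V_def)
  qed (use \<open>\<mu> > 0\<close> \<open>t \<ge> 0\<close> in auto)
  thus ?thesis by (simp add: V_def w_def mult.commute)
qed

lemma solves_ou_equation_mono_initial:
  assumes "\<mu> > 0" "solves_ou_equation \<mu> U u A" "solves_ou_equation \<mu> U' u' A" "u' \<le> u" "t \<ge> 0"
  shows "U' t \<le> U t"
proof -
  have "exp (- \<mu> * t) * (u - u' + 0) \<le> U t - U' t"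
    using assms by (intro solves_ou_equation_lower_bound solves_ou_equation_diff) (auto simp: mono_on_def)
  moreover have "0 \<le> exp (- \<mu> * t) * (u - u' + 0)" using assms(4) by simp
  ultimately show ?thesis by simp
qed

section \<open>Tails and moments of real distributions\<close>

lemma mono_le_tail_sum:
  fixes f :: "real \<Rightarrow> real" and d :: real
  assumes "mono f" "d > 0"
  shows "ennreal (f v) \<le> ennreal (f b) +
           (\<Sum>k. ennreal (f (b + d * (real k + 1)) - f (b + d * real k)) * indicator {b + d * real k<..} v)"
proof (cases "v \<le> b")
  case True
  hence "ennreal (f v) \<le> ennreal (f b)" by (intro ennreal_leI monoD[OF \<open>mono f\<close>])
  thus ?thesis by (rule add_increasing2[rotated]) simp
next
  case False
  \<comment> \<open>telescope up to the first grid point b + d n \<ge> v\<close>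
  define n where "n = nat \<lceil>(v - b) / d\<rceil>"
  define inc where "inc k = f (b + d * (real k + 1)) - f (b + d * real k)" for k
  have inc_nonneg: "inc k \<ge> 0" for k
    unfolding inc_def using \<open>mono f\<close> \<open>d > 0\<close> by (simp add: monoD)
  have "(v - b) / d \<le> real n" unfolding n_def by linarith
  hence "v \<le> b + d * real n" using \<open>d > 0\<close> by (simp add: field_simps)
  hence "f v \<le> f (b + d * real n)" by (rule monoD[OF \<open>mono f\<close>])
  also have "\<dots> = f b + (\<Sum>k<n. inc k)"
    using sum_lessThan_telescope[of "\<lambda>k. f (b + d * real k)" n] by (simp add: inc_def add.commute)
  finally have "ennreal (f v) \<le> ennreal (max (f b) 0 + (\<Sum>k<n. inc k))"
    by (intro ennreal_leI) linarith
  also have "\<dots> = ennreal (f b) + ennreal (\<Sum>k<n. inc k)"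
    by (simp add: ennreal_plus sum_nonneg inc_nonneg ennreal_max_0)
  also have "ennreal (\<Sum>k<n. inc k) = (\<Sum>k<n. ennreal (inc k) * indicator {b + d * real k<..} v)"
  proof -
    have "b + d * real k < v" if "k < n" for k
    proof -
      have "real k < (v - b) / d" using that unfolding n_def by linarith
      thus ?thesis using \<open>d > 0\<close> by (simp add: field_simps)
    qed
    hence "(\<Sum>k<n. ennreal (inc k) * indicator {b + d * real k<..} v) = (\<Sum>k<n. ennreal (inc k))"
      by (intro sum.cong) auto
    thus ?thesis by (simp add: sum_ennreal inc_nonneg)
  qed
  also have "\<dots> \<le> (\<Sum>k. ennreal (inc k) * indicator {b + d * real k<..} v)"
    by (rule sum_le_suminf) auto
  finally show ?thesis unfolding inc_def by (simp add: add_left_mono)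
qed

lemma (in real_distribution) nn_integral_le_tail_sum:
  fixes f :: "real \<Rightarrow> real" and d :: real
  assumes "mono f" "d > 0"
  shows "(\<integral>\<^sup>+ v. ennreal (f v) \<partial>M) \<le> ennreal (f b) +
           (\<Sum>k. ennreal (f (b + d * (real k + 1)) - f (b + d * real k)) * emeasure M {b + d * real k<..})"
proof -
  have "(\<integral>\<^sup>+ v. ennreal (f v) \<partial>M) \<le> (\<integral>\<^sup>+ v. ennreal (f b) +
           (\<Sum>k. ennreal (f (b + d * (real k + 1)) - f (b + d * real k)) * indicator {b + d * real k<..} v) \<partial>M)"
    using assms by (intro nn_integral_mono mono_le_tail_sum)
  also have "\<dots> = ennreal (f b) +
           (\<Sum>k. \<integral>\<^sup>+ v. ennreal (f (b + d * (real k + 1)) - f (b + d * real k)) * indicator {b + d * real k<..} v \<partial>M)"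
    using borel_measurable_mono[OF \<open>mono f\<close>]
    by (simp add: nn_integral_add nn_integral_suminf emeasure_space_1[unfolded space_eq_univ] measurable_cong_sets[OF events_eq_borel refl])
  also have "\<dots> = ennreal (f b) +
           (\<Sum>k. ennreal (f (b + d * (real k + 1)) - f (b + d * real k)) * emeasure M {b + d * real k<..})"
    by (simp add: nn_integral_cmult_indicator)
  finally show ?thesis .
qed

lemma (in real_distribution) not_summable_tails_if_infinite_mean:
  assumes "(\<integral>\<^sup>+ v. ennreal v \<partial>M) = \<infinity>" "d > 0"
  shows "\<not> summable (\<lambda>k. prob {b + d * real k<..})"
proof
  assume summable: "summable (\<lambda>k. prob {b + d * real k<..})"
  have "(\<integral>\<^sup>+ v. ennreal v \<partial>M) \<le> ennreal b + ennreal d * (\<Sum>k. emeasure M {b + d * real k<..})"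
    using nn_integral_le_tail_sum[OF _ \<open>d > 0\<close>, of "\<lambda>v. v" b] by (simp add: mono_def algebra_simps)
  also have "(\<Sum>k. emeasure M {b + d * real k<..}) = ennreal (\<Sum>k. prob {b + d * real k<..})"
    using summable by (simp add: emeasure_eq_measure suminf_ennreal2)
  finally show False using assms(1) by (simp add: top_unique ennreal_mult_eq_top_iff)
qed

lemma (in real_distribution) not_heavy_tailed_if_geometric_tails:
  fixes d \<kappa> C :: real
  assumes "d > 0" "\<kappa> > 1"
    and tails: "eventually (\<lambda>k. prob {b + d * real k<..} \<le> C / \<kappa> ^ k) sequentially"
  shows "\<not> heavy_tailed M"
proof
  \<comment> \<open>exp (a * d) = sqrt \<kappa>, so the k-th term of the tail sum is O(\<kappa> powr (- k / 2))\<close>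
  define a where "a = ln \<kappa> / (2 * d)"
  define \<rho> where "\<rho> = exp (a * d)"
  have "a > 0" using assms(1,2) by (simp add: a_def)
  have "\<rho> > 1" using \<open>a > 0\<close> \<open>d > 0\<close> by (simp add: \<rho>_def)
  have \<kappa>: "\<kappa> ^ k = \<rho> ^ k * \<rho> ^ k" for k
  proof -
    have "\<rho> * \<rho> = \<kappa>"
      using assms(1,2) by (simp add: \<rho>_def a_def flip: exp_add)
    thus ?thesis by (simp flip: power_mult_distrib)
  qed
  define inc where "inc k = exp (a * (b + d * (real k + 1))) - exp (a * (b + d * real k))" for k
  have inc: "0 \<le> inc k" "inc k \<le> exp (a * (b + d)) * \<rho> ^ k" for k
    using \<open>a > 0\<close> \<open>d > 0\<close>
    by (auto simp: inc_def \<rho>_def algebra_simps simp flip: exp_add exp_of_nat_mult)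
  have "summable (\<lambda>k. inc k * prob {b + d * real k<..})"
  proof (rule summable_comparison_test_ev)
    show "summable (\<lambda>k. C * exp (a * (b + d)) * (1 / \<rho>) ^ k)"
      using \<open>\<rho> > 1\<close> by (intro summable_mult summable_geometric) auto
    show "eventually (\<lambda>k. norm (inc k * prob {b + d * real k<..}) \<le> C * exp (a * (b + d)) * (1 / \<rho>) ^ k) sequentially"
      using tails
    proof eventually_elim
      case (elim k)
      have "inc k * prob {b + d * real k<..} \<le> exp (a * (b + d)) * \<rho> ^ k * (C / \<kappa> ^ k)"
        using inc[of k] elim by (intro mult_mono) auto
      also have "\<dots> = C * exp (a * (b + d)) * (1 / \<rho>) ^ k"
        using \<open>\<rho> > 1\<close> by (simp add: \<kappa> power_one_over field_simps)
      finally show ?case using inc[of k] by simp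
    qed
  qed
  hence "(\<Sum>k. ennreal (inc k) * emeasure M {b + d * real k<..}) < \<infinity>"
    using inc by (simp add: emeasure_eq_measure ennreal_mult'[symmetric] suminf_ennreal2)
  moreover have "(\<integral>\<^sup>+ v. ennreal (exp (a * v)) \<partial>M) \<le>
      ennreal (exp (a * b)) + (\<Sum>k. ennreal (inc k) * emeasure M {b + d * real k<..})"
    unfolding inc_def using \<open>a > 0\<close> \<open>d > 0\<close> by (intro nn_integral_le_tail_sum) (auto simp: mono_def)
  ultimately have "(\<integral>\<^sup>+ v. ennreal (exp (a * v)) \<partial>M) < \<infinity>"
    by (simp add: order_le_less_trans)
  moreover assume "heavy_tailed M"
  ultimately show False using \<open>a > 0\<close> unfolding heavy_tailed_def by auto
qed

lemma measure_diff_le_tv_norm: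
  assumes "prob_space P" "prob_space Q" "B \<in> sets P"
  shows "\<bar>measure P B - measure Q B\<bar> \<le> tv_norm P Q"
proof -
  define f where "f A = \<bar>measure P A - measure Q A\<bar> + \<bar>measure P (space P - A) - measure Q (space P - A)\<bar>" for A
  have le_1: "\<bar>measure P A - measure Q A\<bar> \<le> 1" for A
    using prob_space.prob_le_1[OF assms(1), of A] prob_space.prob_le_1[OF assms(2), of A]
      measure_nonneg[of P A] measure_nonneg[of Q A] unfolding abs_le_iff by linarith
  have "bdd_above (f ` sets P)"
    unfolding f_def by (intro bdd_aboveI[of _ 2]) (auto intro: add_mono[OF le_1 le_1, simplified])
  hence "f B \<le> tv_norm P Q" unfolding tv_norm_def f_def[symmetric] using assms(3) by (rule cSUP_upper2) simp
  thus ?thesis unfolding f_def by simp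
qed

lemma (in finite_borel_measure) measure_greaterThan_eq_diff:
  "measure M {x<..} = measure M UNIV - measure M {..x}"
  using finite_measure_compl[of "{..x}"] by (simp add: borel_UNIV Diff_eq sets_M)

lemma (in real_distribution) prob_greaterThan_eq_1_minus:
  "prob {x<..} = 1 - prob {..x}"
  using measure_greaterThan_eq_diff prob_space by simp

section \<open>The compound-Poisson-driven process\<close>

lemma real_distribution_if_invariant:
  "invariant_measure M X \<pi> \<Longrightarrow> prob_space \<pi> \<Longrightarrow> real_distribution \<pi>"
  unfolding invariant_measure_def real_distribution_def real_distribution_axioms_def by simp

lemma finite_borel_measure_if_invariant:
  "invariant_measure M X \<pi> \<Longrightarrow> finite_measure \<pi> \<Longrightarrow> finite_borel_measure \<pi>"
  unfolding invariant_measure_def finite_borel_measure_def finite_borel_measure_axioms_def by simp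

locale ou_setting = prob_space M for M :: "'a measure" +
  fixes \<mu> lam :: real and N :: "real \<Rightarrow> 'a \<Rightarrow> nat"
    and W :: "nat \<Rightarrow> 'a \<Rightarrow> real" and F :: "real measure"
    and X :: "real \<Rightarrow> real \<Rightarrow> 'a \<Rightarrow> real"
  assumes mu: "\<mu> > 0" and lam: "lam > 0"
    and poisson: "poisson_process M lam N"
    and F: "prob_space F" and sets_F: "sets F = sets borel" and F_pos: "emeasure F {0<..} = 1"
    and W: "\<forall>i\<ge>1. W i \<in> borel_measurable M \<and> distr M borel (W i) = F"
    and indep_N_W: "indep_set
           (sigma_sets (space M) (\<Union>t. {N t -` A \<inter> space M | A. A \<subseteq> (UNIV::nat set)}))
           (sigma_sets (space M) (\<Union>i\<in>{1..}. {W i -` B \<inter> space M | B. B \<in> sets borel}))"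
    and sol: "\<forall>x\<ge>0. ou_solution M \<mu> N W x (X x)"
begin

sublocale F: real_distribution F
  using F sets_F by (simp add: real_distribution_def real_distribution_axioms_def)

sublocale log_F: real_distribution "distr F borel ln"
  by (simp add: real_distribution_def real_distribution_axioms_def F.prob_space_distr)

lemma AE_W_pos: "AE \<omega> in M. \<forall>i\<ge>1. 0 < W i \<omega>"
proof -
  have "F.prob {0<..} = 1" using F_pos by (simp add: F.emeasure_eq_measure)
  hence "AE w in F. w \<in> {0<..}" by (subst F.AE_in_set_eq_1) simp_all
  hence "AE \<omega> in M. 0 < W i \<omega>" if "i \<ge> 1" for i
    using W that by (auto simp: AE_distr_iff simp flip: measurable_cong_sets[OF sets_F refl])
  thus ?thesis by (subst AE_all_countable) auto
qed

lemma N_at_0: "\<omega> \<in> space M \<Longrightarrow> N 0 \<omega> = 0"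
  and N_mono: "\<omega> \<in> space M \<Longrightarrow> mono_on {0..} (\<lambda>t. N t \<omega>)"
  using poisson unfolding poisson_process_def by auto

lemma cpp_nonneg: "\<forall>i\<ge>1. 0 < W i \<omega> \<Longrightarrow> 0 \<le> cpp N W t \<omega>"
  unfolding cpp_def by (intro sum_nonneg) auto

lemma first_jump_le_cpp: "\<forall>i\<ge>1. 0 < W i \<omega> \<Longrightarrow> 1 \<le> N t \<omega> \<Longrightarrow> W 1 \<omega> \<le> cpp N W t \<omega>"
  unfolding cpp_def by (intro member_le_sum) auto

lemma solves_ou_equation_path:
  assumes "x \<ge> 0" "\<omega> \<in> space M"
  shows "solves_ou_equation \<mu> (\<lambda>t. X x t \<omega>) x (\<lambda>t. cpp N W t \<omega>)"
  unfolding solves_ou_equation_def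
proof (intro allI impI conjI)
  fix t :: real assume "t \<ge> 0"
  hence "set_integrable lborel {0..t} (\<lambda>s. X x s \<omega>)"
    and "X x t \<omega> = x - \<mu> * (LBINT s:{0..t}. X x s \<omega>) + cpp N W t \<omega>"
    using sol assms unfolding ou_solution_def by auto
  thus "(\<lambda>t. X x t \<omega>) integrable_on {0..t}"
    and "X x t \<omega> = x - \<mu> * integral {0..t} (\<lambda>t. X x t \<omega>) + cpp N W t \<omega>"
    by (simp_all add: set_borel_integral_eq_integral)
qed

lemma X_lower_bound:
  assumes "x \<ge> 0" "t \<ge> 0" "\<omega> \<in> space M" "\<forall>i\<ge>1. 0 < W i \<omega>"
  shows "exp (- \<mu> * t) * (x + cpp N W t \<omega>) \<le> X x t \<omega>"
proof -
  have "mono_on {0..} (\<lambda>t. cpp N W t \<omega>)"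
    using N_mono[OF assms(3)] assms(4) unfolding cpp_def
    by (intro mono_onI sum_mono2) (auto simp: mono_on_def)
  moreover have "cpp N W 0 \<omega> = 0" using N_at_0[OF assms(3)] by (simp add: cpp_def)
  ultimately show ?thesis
    using solves_ou_equation_path[OF assms(1,3)] assms(1,2) by (intro solves_ou_equation_lower_bound[OF mu])
qed

lemma X_mono_initial:
  assumes "x \<ge> 0" "t \<ge> 0" "\<omega> \<in> space M"
  shows "X 0 t \<omega> \<le> X x t \<omega>"
  using assms
  by (intro solves_ou_equation_mono_initial[OF mu solves_ou_equation_path solves_ou_equation_path]) auto

lemma X_measurable: "x \<ge> 0 \<Longrightarrow> t \<ge> 0 \<Longrightarrow> X x t \<in> borel_measurable M"
  using sol unfolding ou_solution_def by auto

lemma prob_space_trans: "x \<ge> 0 \<Longrightarrow> t \<ge> 0 \<Longrightarrow> prob_space (trans M X t x)"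
  unfolding trans_def by (intro prob_space_distr X_measurable)

lemma measure_trans_greaterThan:
  "x \<ge> 0 \<Longrightarrow> t \<ge> 0 \<Longrightarrow> measure (trans M X t x) {y<..} = prob {\<omega> \<in> space M. y < X x t \<omega>}"
  unfolding trans_def by (subst measure_distr) (auto intro: X_measurable simp: vimage_def Int_def conj_commute)

definition tail0 :: "real \<Rightarrow> real \<Rightarrow> real" where
  "tail0 t y = prob {\<omega> \<in> space M. y < X 0 t \<omega>}"

lemma tail0_le_prob_X_greater:
  assumes "x \<ge> 0" "t \<ge> 0"
  shows "tail0 t y \<le> prob {\<omega> \<in> space M. y < X x t \<omega>}"
proof -
  have "y < X x t \<omega>" if "\<omega> \<in> space M" "y < X 0 t \<omega>" for \<omega>
    using X_mono_initial[OF assms that(1)] that(2) by linarith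
  moreover have "{\<omega> \<in> space M. y < X x t \<omega>} \<in> events"
    using X_measurable[OF assms] by measurable
  ultimately show ?thesis unfolding tail0_def by (intro finite_measure_mono) auto
qed

lemma prob_X_greater_eq_1:
  assumes "x \<ge> 0" "t \<ge> 0" "y * exp (\<mu> * t) < x"
  shows "prob {\<omega> \<in> space M. y < X x t \<omega>} = 1"
proof -
  have "AE \<omega> in M. \<omega> \<in> {\<omega> \<in> space M. y < X x t \<omega>}"
    using AE_W_pos AE_space
  proof eventually_elim
    case (elim \<omega>)
    have "y < exp (- \<mu> * t) * x"
      using assms(3) by (simp add: exp_minus field_simps)
    also have "\<dots> \<le> exp (- \<mu> * t) * (x + cpp N W t \<omega>)"
      using cpp_nonneg[OF elim(1)] by simp
    also have "\<dots> \<le> X x t \<omega>"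
      using X_lower_bound[OF assms(1,2) elim(2,1)] .
    finally show ?case using elim(2) by simp
  qed
  thus ?thesis
    using X_measurable[OF assms(1,2)] by (subst (asm) AE_in_set_eq_1) auto
qed

lemma trans_tail_lower_bound:
  assumes "x \<ge> 0" "t \<ge> 0"
  shows "indicator {y * exp (\<mu> * t)<..} x + indicator {..y * exp (\<mu> * t)} x * tail0 t y
           \<le> measure (trans M X t x) {y<..}"
  using prob_X_greater_eq_1[OF assms] tail0_le_prob_X_greater[OF assms]
  by (auto simp: measure_trans_greaterThan[OF assms] indicator_def not_less)

lemma invariant_tail_inequality:
  assumes inv: "invariant_measure M X \<pi>" and "finite_measure \<pi>" and "t \<ge> 0"
  shows "measure \<pi> {y * exp (\<mu> * t)<..} + measure \<pi> {..y * exp (\<mu> * t)} * tail0 t y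
           \<le> measure \<pi> {y<..}"
proof -
  interpret \<pi>: finite_measure \<pi> by fact
  define b where "b = y * exp (\<mu> * t)"
  define f where "f x = indicator {b<..} x + indicator {..b} x * tail0 t y" for x :: real
  have sets_\<pi>: "sets \<pi> = sets borel" and "emeasure \<pi> (- {0..}) = 0"
    and invariance: "emeasure \<pi> {y<..} = (\<integral>\<^sup>+ x. emeasure (trans M X t x) {y<..} \<partial>\<pi>)"
    using inv \<open>t \<ge> 0\<close> unfolding invariant_measure_def by auto
  hence "AE x in \<pi>. x \<ge> 0"
    by (intro AE_I'[of "- {0..}"]) (auto simp: sets_eq_imp_space_eq[OF sets_\<pi>])
  have "integrable \<pi> f"
    unfolding f_def
    by (auto simp: integrable_indicator_iff sets_\<pi> \<pi>.emeasure_eq_measure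
        intro!: Bochner_Integration.integrable_add integrable_mult_left)
  moreover have "0 \<le> f x" for x unfolding f_def tail0_def by simp
  moreover have "integral\<^sup>L \<pi> f = measure \<pi> {b<..} + measure \<pi> {..b} * tail0 t y"
    unfolding f_def
    by (subst Bochner_Integration.integral_add)
       (auto simp: integrable_indicator_iff sets_\<pi> \<pi>.emeasure_eq_measure)
  ultimately have "ennreal (measure \<pi> {b<..} + measure \<pi> {..b} * tail0 t y) = (\<integral>\<^sup>+ x. ennreal (f x) \<partial>\<pi>)"
    by (simp add: nn_integral_eq_integral)
  also have "\<dots> \<le> (\<integral>\<^sup>+ x. emeasure (trans M X t x) {y<..} \<partial>\<pi>)"
    using \<open>AE x in \<pi>. x \<ge> 0\<close>
  proof (rule nn_integral_mono_AE[OF eventually_mono])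
    fix x :: real assume "x \<ge> 0"
    thus "ennreal (f x) \<le> emeasure (trans M X t x) {y<..}"
      using trans_tail_lower_bound[OF _ \<open>t \<ge> 0\<close>, of x y]
        finite_measure.emeasure_eq_measure[OF prob_space.finite_measure, OF prob_space_trans]
        \<open>t \<ge> 0\<close> by (simp add: f_def b_def ennreal_leI)
  qed
  also have "\<dots> = ennreal (measure \<pi> {y<..})" using invariance by (simp add: \<pi>.emeasure_eq_measure)
  finally show ?thesis unfolding b_def by (simp add: ennreal_le_iff)
qed

lemma prob_first_jump_before_1: "prob (N 1 -` {1..} \<inter> space M) = 1 - exp (- lam)"
proof -
  have "\<forall>s t k. 0 \<le> s \<longrightarrow> s \<le> t \<longrightarrow> prob {\<omega> \<in> space M. N t \<omega> - N s \<omega> = k}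
          = (lam * (t - s)) ^ k / fact k * exp (- (lam * (t - s)))"
    using poisson unfolding poisson_process_def by blast
  from this[rule_format, of 0 1 0] have "prob {\<omega> \<in> space M. N 1 \<omega> - N 0 \<omega> = 0} = exp (- lam)"
    by simp
  moreover have "{\<omega> \<in> space M. N 1 \<omega> - N 0 \<omega> = 0} = space M - (N 1 -` {1..} \<inter> space M)"
    using N_at_0 by auto
  moreover have "N 1 \<in> measurable M (count_space UNIV)"
    using poisson unfolding poisson_process_def by blast
  hence "N 1 -` {1..} \<inter> space M \<in> events" by (rule measurable_sets) simp
  ultimately show ?thesis by (simp add: prob_compl)
qed

lemma X_0_1_gt_if_large_first_jump:
  assumes "\<omega> \<in> space M" "\<forall>i\<ge>1. 0 < W i \<omega>" "1 \<le> N 1 \<omega>" "s + \<mu> < ln (W 1 \<omega>)"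
  shows "exp s < X 0 1 \<omega>"
proof -
  have "exp (s + \<mu>) < exp (ln (W 1 \<omega>))" using assms(4) by simp
  hence "exp (s + \<mu>) < W 1 \<omega>" using assms(2) by simp
  have "exp s = exp (- \<mu>) * exp (s + \<mu>)" by (simp flip: exp_add)
  also have "\<dots> < exp (- \<mu>) * W 1 \<omega>"
    using \<open>exp (s + \<mu>) < W 1 \<omega>\<close> by simp
  also have "\<dots> \<le> exp (- \<mu> * 1) * (0 + cpp N W 1 \<omega>)"
    using first_jump_le_cpp[OF assms(2,3)] by simp
  also have "\<dots> \<le> X 0 1 \<omega>"
    using X_lower_bound[of 0 1, OF _ _ assms(1,2)] by simp
  finally show ?thesis .
qed

lemma prob_log_first_jump_greater:
  "prob (W 1 -` {w. b < ln w} \<inter> space M) = measure (distr F borel ln) {b<..}"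
proof -
  have "{w. b < ln w} \<in> sets borel" by measurable
  moreover have "W 1 \<in> borel_measurable M" "distr M borel (W 1) = F" using W by auto
  ultimately have "prob (W 1 -` {w. b < ln w} \<inter> space M) = F.prob {w. b < ln w}"
    by (metis measure_distr)
  thus ?thesis by (simp add: measure_distr F.space_eq_univ vimage_def)
qed

lemma tail0_1_lower_bound:
  "(1 - exp (- lam)) * measure (distr F borel ln) {s + \<mu><..} \<le> tail0 1 (exp s)"
proof -
  define E1 where "E1 = N 1 -` {1..} \<inter> space M"
  define E2 where "E2 = W 1 -` {w. s + \<mu> < ln w} \<inter> space M"
  have "E1 \<in> sigma_sets (space M) (\<Union>t. {N t -` A \<inter> space M | A. A \<subseteq> (UNIV::nat set)})"
    unfolding E1_def by (rule sigma_sets.Basic) blast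
  moreover have "E2 \<in> sigma_sets (space M) (\<Union>i\<in>{1..}. {W i -` B \<inter> space M | B. B \<in> sets borel})"
    unfolding E2_def by (rule sigma_sets.Basic) (auto intro!: exI[of _ "{w. s + \<mu> < ln w}"])
  ultimately have "prob (E1 \<inter> E2) = prob E1 * prob E2" by (rule indep_setD[OF indep_N_W])
  moreover have "prob (E1 \<inter> E2) \<le> tail0 1 (exp s)"
    unfolding tail0_def
  proof (rule finite_measure_mono_AE)
    show "AE \<omega> in M. \<omega> \<in> E1 \<inter> E2 \<longrightarrow> \<omega> \<in> {\<omega> \<in> space M. exp s < X 0 1 \<omega>}"
      using AE_W_pos by eventually_elim (auto simp: E1_def E2_def intro: X_0_1_gt_if_large_first_jump)
    show "{\<omega> \<in> space M. exp s < X 0 1 \<omega>} \<in> events"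
      using X_measurable[of 0 1] by measurable
  qed
  ultimately show ?thesis
    using prob_first_jump_before_1 prob_log_first_jump_greater by (simp add: E1_def E2_def)
qed

lemma invariant_cdf_step:
  assumes "invariant_measure M X \<pi>" "finite_measure \<pi>"
  shows "measure \<pi> {..y} \<le> measure \<pi> {..y * exp \<mu>} * exp (- tail0 1 y)"
proof -
  interpret \<pi>: finite_borel_measure \<pi> using assms by (rule finite_borel_measure_if_invariant)
  have "measure \<pi> {y * exp \<mu><..} + measure \<pi> {..y * exp \<mu>} * tail0 1 y \<le> measure \<pi> {y<..}"
    using invariant_tail_inequality[OF assms, of 1 y] by simp
  hence "measure \<pi> {..y} \<le> measure \<pi> {..y * exp \<mu>} * (1 - tail0 1 y)"
    by (simp add: \<pi>.measure_greaterThan_eq_diff algebra_simps)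
  also have "\<dots> \<le> measure \<pi> {..y * exp \<mu>} * exp (- tail0 1 y)"
    by (intro mult_left_mono) (auto simp: add.commute[of 1] exp_ge_add_one_self[of "- _", simplified])
  finally show ?thesis .
qed

lemma invariant_cdf_bound:
  assumes "invariant_measure M X \<pi>" "finite_measure \<pi>"
  shows "measure \<pi> {..exp s} \<le> measure \<pi> UNIV *
           exp (- (1 - exp (- lam)) * (\<Sum>k<K. measure (distr F borel ln) {s + \<mu> + \<mu> * real k<..}))"
proof (induction K arbitrary: s)
  case 0
  show ?case using assms(1) by (simp add: invariant_measure_def finite_measure.finite_measure_mono[OF assms(2)])
next
  case (Suc K)
  define G where "G = distr F borel ln"
  have "measure \<pi> {..exp s} \<le> measure \<pi> {..exp (s + \<mu>)} * exp (- tail0 1 (exp s))"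
    using invariant_cdf_step[OF assms, of "exp s"] by (simp add: exp_add)
  also have "\<dots> \<le> measure \<pi> UNIV * exp (- (1 - exp (- lam)) * (\<Sum>k<K. measure G {s + \<mu> + \<mu> + \<mu> * real k<..}))
                  * exp (- (1 - exp (- lam)) * measure G {s + \<mu><..})"
  proof (intro mult_mono)
    show "exp (- tail0 1 (exp s)) \<le> exp (- (1 - exp (- lam)) * measure G {s + \<mu><..})"
      using tail0_1_lower_bound[of s] unfolding G_def
      by (simp only: exp_le_cancel_iff mult_minus_left neg_le_iff_le)
  qed (use Suc.IH[of "s + \<mu>"] in \<open>simp_all add: G_def\<close>)
  also have "\<dots> = measure \<pi> UNIV * exp (- (1 - exp (- lam)) * (\<Sum>k<Suc K. measure G {s + \<mu> + \<mu> * real k<..}))"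
  proof -
    have "(\<Sum>k<Suc K. measure G {s + \<mu> + \<mu> * real k<..})
        = measure G {s + \<mu><..} + (\<Sum>k<K. measure G {s + \<mu> + \<mu> + \<mu> * real k<..})"
      by (subst sum.lessThan_Suc_shift) (simp add: algebra_simps)
    thus ?thesis by (simp add: ring_distribs exp_add)
  qed
  finally show ?case unfolding G_def .
qed

lemma invariant_cdf_eq_0:
  assumes log_mean: "(\<integral>\<^sup>+ v. ennreal v \<partial>distr F borel ln) = \<infinity>"
    and inv: "invariant_measure M X \<pi>" and "finite_measure \<pi>"
  shows "measure \<pi> {..exp s} = 0"
proof (rule ccontr)
  interpret \<pi>: finite_measure \<pi> by fact
  define c where "c = 1 - exp (- lam)"
  have "c > 0" using lam by (simp add: c_def)
  assume "measure \<pi> {..exp s} \<noteq> 0"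
  hence pos: "0 < measure \<pi> {..exp s}" by (simp add: zero_less_measure_iff)
  have "(\<Sum>k<K. log_F.prob {s + \<mu> + \<mu> * real k<..}) \<le> ln (measure \<pi> UNIV / measure \<pi> {..exp s}) / c" for K
  proof -
    have "measure \<pi> {..exp s} \<le> measure \<pi> UNIV * exp (- c * (\<Sum>k<K. log_F.prob {s + \<mu> + \<mu> * real k<..}))"
      unfolding c_def using invariant_cdf_bound[OF inv \<pi>.finite_measure_axioms] .
    hence exp_le: "exp (c * (\<Sum>k<K. log_F.prob {s + \<mu> + \<mu> * real k<..})) \<le> measure \<pi> UNIV / measure \<pi> {..exp s}"
      using pos by (simp add: field_simps exp_minus)
    hence "c * (\<Sum>k<K. log_F.prob {s + \<mu> + \<mu> * real k<..}) \<le> ln (measure \<pi> UNIV / measure \<pi> {..exp s})"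
      by (subst ln_ge_iff[OF order.strict_trans2[OF exp_gt_zero exp_le]]) (rule exp_le)
    thus ?thesis using \<open>c > 0\<close> by (simp add: field_simps)
  qed
  hence "summable (\<lambda>k. log_F.prob {s + \<mu> + \<mu> * real k<..})"
    by (intro summableI_nonneg_bounded) auto
  thus False using log_F.not_summable_tails_if_infinite_mean[OF log_mean mu] by blast
qed

lemma no_finite_invariant_measure:
  assumes log_mean: "(\<integral>\<^sup>+ v. ennreal v \<partial>distr F borel ln) = \<infinity>"
    and inv: "invariant_measure M X \<pi>" and "emeasure \<pi> UNIV < \<infinity>"
  shows False
proof -
  have sets_\<pi>: "sets \<pi> = sets borel" and "emeasure \<pi> {0..} > 0"
    using inv unfolding invariant_measure_def by auto
  interpret \<pi>: finite_measure \<pi>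
    using \<open>emeasure \<pi> UNIV < \<infinity>\<close> by (intro finite_measureI) (simp add: sets_eq_imp_space_eq[OF sets_\<pi>])
  have "{0..} \<subseteq> (\<Union>n. {..exp (real n)})"
  proof
    fix x :: real
    obtain n where "x \<le> real n" using real_arch_simple by blast
    also have "real n \<le> exp (real n)" using exp_ge_add_one_self[of "real n"] by linarith
    finally show "x \<in> (\<Union>n. {..exp (real n)})" by auto
  qed
  moreover have "emeasure \<pi> (\<Union>n. {..exp (real n)}) = 0"
    using invariant_cdf_eq_0[OF log_mean inv \<pi>.finite_measure_axioms]
    by (intro emeasure_UN_eq_0) (auto simp: \<pi>.emeasure_eq_measure sets_\<pi>)
  ultimately have "emeasure \<pi> {0..} = 0"
    using emeasure_eq_0[of "\<Union>n. {..exp (real n)}" \<pi> "{0..}"] by (simp add: sets_\<pi>)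
  with \<open>emeasure \<pi> {0..} > 0\<close> show False by simp
qed

lemma tail0_1_le_invariant_tail:
  assumes "invariant_measure M X \<pi>" "prob_space \<pi>"
  shows "tail0 1 b \<le> measure \<pi> {b<..}"
proof -
  interpret \<pi>: real_distribution \<pi> using assms(1,2) by (rule real_distribution_if_invariant)
  define p where "p = measure \<pi> {b * exp \<mu><..}"
  have "p + (1 - p) * tail0 1 b \<le> measure \<pi> {b<..}"
    using invariant_tail_inequality[OF assms(1) \<pi>.finite_measure_axioms, of 1 b]
    by (simp add: p_def \<pi>.prob_greaterThan_eq_1_minus)
  moreover have "0 \<le> p * (1 - tail0 1 b)" unfolding p_def tail0_def by simp
  ultimately show ?thesis by (simp add: algebra_simps)
qed

lemma invariant_tail_le_tv_norm:
  assumes inv: "invariant_measure M X \<pi>" and "prob_space \<pi>" and "t \<ge> 0"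
    and "1 / 2 \<le> measure \<pi> {..y} - tv_norm (trans M X t 0) \<pi>"
  shows "measure \<pi> {y * exp (\<mu> * t)<..} \<le> 2 * tv_norm (trans M X t 0) \<pi>"
proof -
  interpret \<pi>: real_distribution \<pi> using assms(1,2) by (rule real_distribution_if_invariant)
  interpret T: real_distribution "trans M X t 0"
    using prob_space_trans[OF _ \<open>t \<ge> 0\<close>] by (simp add: real_distribution_def real_distribution_axioms_def trans_def)
  define \<delta> where "\<delta> = tv_norm (trans M X t 0) \<pi>"
  define p where "p = measure \<pi> {y * exp (\<mu> * t)<..}"
  have close: "\<bar>T.prob B - \<pi>.prob B\<bar> \<le> \<delta>" if "B \<in> sets borel" for B
    unfolding \<delta>_def using that by (intro measure_diff_le_tv_norm T.prob_space_axioms \<pi>.prob_space_axioms) simp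
  have T_tail: "T.prob {y<..} = tail0 t y"
    using measure_trans_greaterThan[OF _ \<open>t \<ge> 0\<close>] by (simp add: tail0_def)
  have T_compl: "T.prob {..y} = 1 - tail0 t y" and \<pi>_compl: "\<pi>.prob {..y * exp (\<mu> * t)} = 1 - p"
    using T.prob_greaterThan_eq_1_minus[of y] \<pi>.prob_greaterThan_eq_1_minus[of "y * exp (\<mu> * t)"]
    by (simp_all add: T_tail p_def)
  have "1 / 2 \<le> 1 - tail0 t y"
    using close[of "{..y}"] assms(4) by (simp add: T_compl \<delta>_def abs_le_iff)
  moreover have "p * (1 - tail0 t y) \<le> \<delta>"
    using invariant_tail_inequality[OF inv \<pi>.finite_measure_axioms \<open>t \<ge> 0\<close>, of y] close[of "{y<..}"]
    by (simp add: \<pi>_compl T_tail p_def abs_le_iff algebra_simps)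
  moreover have "0 \<le> p" by (simp add: p_def)
  ultimately have "p * (1 / 2) \<le> \<delta>" by (smt (verit) mult_left_mono)
  thus ?thesis by (simp add: p_def \<delta>_def)
qed

lemma not_heavy_tailed_if_geometrically_ergodic:
  assumes inv: "invariant_measure M X \<pi>" and "prob_space \<pi>" and "\<kappa> > 1"
    and lim: "((\<lambda>t. \<kappa> powr t * tv_norm (trans M X t 0) \<pi>) \<longlongrightarrow> 0) at_top"
  shows "\<not> heavy_tailed (distr F borel ln)"
proof -
  interpret \<pi>: real_distribution \<pi> using assms(1,2) by (rule real_distribution_if_invariant)
  define tv where "tv n = tv_norm (trans M X (real n) 0) \<pi>" for n
  define c where "c = 1 - exp (- lam)"
  have "c > 0" using lam by (simp add: c_def)
  have "eventually (\<lambda>s. 3 / 4 < cdf \<pi> (exp s)) at_top"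
    using filterlim_compose[OF \<pi>.cdf_lim_at_top_prob exp_at_top] by (rule order_tendstoD) simp
  then obtain s where s: "3 / 4 < \<pi>.prob {..exp s}"
    by (auto simp: cdf_def2 eventually_at_top_linorder)
  have "eventually (\<lambda>n. \<kappa> powr real n * tv n < 1) sequentially"
    using filterlim_compose[OF lim filterlim_real_sequentially] unfolding tv_def
    by (rule order_tendstoD) simp
  moreover have "eventually (\<lambda>n. (1 / \<kappa>) ^ n < 1 / 4) sequentially"
    using \<open>\<kappa> > 1\<close> by (intro order_tendstoD(2)[OF LIMSEQ_realpow_zero]) auto
  ultimately have "eventually (\<lambda>n. log_F.prob {s + \<mu> + \<mu> * real n<..} \<le> (2 / c) / \<kappa> ^ n) sequentially"
  proof eventually_elim
    case (elim n)
    have tv: "tv n < 1 / \<kappa> ^ n"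
      using elim \<open>\<kappa> > 1\<close> by (simp add: powr_realpow field_simps)
    also have "\<dots> < 1 / 4" using elim by (simp add: power_one_over)
    finally have "tv n < 1 / 4" .
    have "c * log_F.prob {s + \<mu> * real n + \<mu><..} \<le> tail0 1 (exp (s + \<mu> * real n))"
      unfolding c_def by (rule tail0_1_lower_bound)
    also have "\<dots> \<le> \<pi>.prob {exp s * exp (\<mu> * real n)<..}"
      using tail0_1_le_invariant_tail[OF inv \<open>prob_space \<pi>\<close>] by (simp add: exp_add)
    also have "\<dots> \<le> 2 * tv n"
      using s \<open>tv n < 1 / 4\<close> unfolding tv_def
      by (intro invariant_tail_le_tv_norm[OF inv \<open>prob_space \<pi>\<close>]) auto
    also have "\<dots> \<le> 2 / \<kappa> ^ n" using tv by simp
    finally have "c * log_F.prob {s + \<mu> * real n + \<mu><..} \<le> 2 / \<kappa> ^ n" .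
    thus ?case using \<open>c > 0\<close> \<open>\<kappa> > 1\<close> by (simp add: field_simps add.commute add.left_commute)
  qed
  thus ?thesis by (rule log_F.not_heavy_tailed_if_geometric_tails[OF mu \<open>\<kappa> > 1\<close>])
qed

end

theorem lemma17:
  fixes M :: "'a measure" and \<mu> lam :: real and N :: "real \<Rightarrow> 'a \<Rightarrow> nat"
    and W :: "nat \<Rightarrow> 'a \<Rightarrow> real" and F :: "real measure"
    and X :: "real \<Rightarrow> real \<Rightarrow> 'a \<Rightarrow> real"
  assumes "prob_space M" and "\<mu> > 0" and "lam > 0"
    and "poisson_process M lam N"
    and "prob_space F" and "sets F = sets borel" and "emeasure F {0<..} = 1"
    and "\<forall>i\<ge>1. W i \<in> borel_measurable M \<and> distr M borel (W i) = F"
    and "prob_space.indep_vars M (\<lambda>_. borel) W {1..}"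
    and "prob_space.indep_set M
           (sigma_sets (space M) (\<Union>t. {N t -` A \<inter> space M | A. A \<subseteq> (UNIV::nat set)}))
           (sigma_sets (space M) (\<Union>i\<in>{1..}. {W i -` B \<inter> space M | B. B \<in> sets borel}))"
    and "\<forall>x\<ge>0. ou_solution M \<mu> N W x (X x)"
  shows "((\<integral>\<^sup>+ y. ennreal y \<partial>(distr F borel ln)) = \<infinity> \<and>
          (\<integral>\<^sup>+ y. ennreal (- y) \<partial>(distr F borel ln)) < \<infinity>
            \<longrightarrow> \<not> positive_recurrent M X)
       \<and> (heavy_tailed (distr F borel ln) \<longrightarrow> \<not> geometrically_ergodic M X)"
proof -
  interpret ou_setting M \<mu> lam N W F X
    using assms by (intro ou_setting.intro ou_setting_axioms.intro) simp_all
  show ?thesis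
  proof (intro conjI impI notI)
    assume "(\<integral>\<^sup>+ y. ennreal y \<partial>(distr F borel ln)) = \<infinity> \<and>
      (\<integral>\<^sup>+ y. ennreal (- y) \<partial>(distr F borel ln)) < \<infinity>" and "positive_recurrent M X"
    thus False using no_finite_invariant_measure unfolding positive_recurrent_def by blast
  next
    assume "heavy_tailed (distr F borel ln)" and "geometrically_ergodic M X"
    thus False using not_heavy_tailed_if_geometrically_ergodic unfolding geometrically_ergodic_def by blast
  qed
qed

end
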